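(* Let $\mathcal{D}$ be a distribution supported on $[0,1]$ with largest median $\nu=\sup\{y:\Pr_{x\sim\mathcal{D}}(x\le y)\le\frac12\}$. Then for all $n,m$ and every preference profile $\sigma$ on $n$ voters and $m$ alternatives, the alternative $f(\sigma)$ selected by binomial voting satisfies $\mathbb{E}[\mathrm{sw}(f(\sigma),u)]\ge\frac{\nu}{2}\max_{j\in A}\mathbb{E}[\mathrm{sw}(j,u)]$; i.e., binomial voting is a $\frac{\nu}{2}$-expected-welfare-maximizing rule for $\mathcal{D}$.
   Context: There are $n$ voters and $m$ alternatives $A=\{1,\dots,m\}$. A preference profile $\sigma$ consists of a ranking of $A$ for each voter; position $1$ is the top. Given $\mathcal{D}$ and $\sigma$, a random utility profile $u$ consistent with $\sigma$ is generated as follows: independently for each voter $i$, draw $m$ i.i.d. samples from $\mathcal{D}$ and assign them, from highest to lowest, to the alternatives in the order of voter $i$'s ranking. The social welfare of $j$ is $\mathrm{sw}(j,u)=\sum_i u_{ij}$; expectations are over $u$. Binomial voting is the scoring rule in which each voter gives $\sum_{\ell=k}^m\binom{m}{\ell}$ points to the alternative she ranks in position $k$; it selects an alternative with the largest total score (ties broken arbitrarily). *)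

theory Defs
  imports "HOL-Probability.Probability"
begin

text \<open>A preference profile is given by
  pos i j = position (1 = top) of alternative j in voter i's ranking; for each voter
  pos i is a bijection from the alternatives onto the positions 1..m.\<close>

definition is_profile :: "nat \<Rightarrow> nat \<Rightarrow> (nat \<Rightarrow> nat \<Rightarrow> nat) \<Rightarrow> bool" where
  "is_profile n m pos \<longleftrightarrow> (\<forall>i\<in>{1..n}. bij_betw (pos i) {1..m} {1..m})"

definition kth_largest :: "nat \<Rightarrow> (nat \<Rightarrow> real) \<Rightarrow> nat \<Rightarrow> real" where
  "kth_largest m x k = rev (sort (map x [0..<m])) ! (k - 1)"

text \<open>Sample space of the random utility profile: for each voter i and each sample
  index s < m an independent draw from D.\<close>
definition sample_space :: "nat \<Rightarrow> nat \<Rightarrow> real measure \<Rightarrow> (nat \<times> nat \<Rightarrow> real) measure" where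
  "sample_space n m D = PiM ({1..n} \<times> {..<m}) (\<lambda>_. D)"

text \<open>Utility u i j of voter i for alternative j consistent with the profile:
  the samples of voter i assigned from highest to lowest along her ranking.\<close>
definition utility :: "nat \<Rightarrow> (nat \<Rightarrow> nat \<Rightarrow> nat) \<Rightarrow> (nat \<times> nat \<Rightarrow> real) \<Rightarrow> nat \<Rightarrow> nat \<Rightarrow> real" where
  "utility m pos \<omega> i j = kth_largest m (\<lambda>s. \<omega> (i, s)) (pos i j)"

definition sw :: "nat \<Rightarrow> nat \<Rightarrow> (nat \<Rightarrow> nat \<Rightarrow> nat) \<Rightarrow> nat \<Rightarrow> (nat \<times> nat \<Rightarrow> real) \<Rightarrow> real" where
  "sw n m pos j \<omega> = (\<Sum>i\<in>{1..n}. utility m pos \<omega> i j)"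

definition expected_sw :: "real measure \<Rightarrow> nat \<Rightarrow> nat \<Rightarrow> (nat \<Rightarrow> nat \<Rightarrow> nat) \<Rightarrow> nat \<Rightarrow> real" where
  "expected_sw D n m pos j = (\<integral>\<omega>. sw n m pos j \<omega> \<partial>sample_space n m D)"

definition binom_points :: "nat \<Rightarrow> nat \<Rightarrow> nat" where
  "binom_points m k = (\<Sum>l=k..m. m choose l)"

definition binom_score :: "nat \<Rightarrow> nat \<Rightarrow> (nat \<Rightarrow> nat \<Rightarrow> nat) \<Rightarrow> nat \<Rightarrow> nat" where
  "binom_score n m pos j = (\<Sum>i\<in>{1..n}. binom_points m (pos i j))"

text \<open>j is a possible outcome of binomial voting (ties broken arbitrarily).\<close>
definition binomial_winner :: "nat \<Rightarrow> nat \<Rightarrow> (nat \<Rightarrow> nat \<Rightarrow> nat) \<Rightarrow> nat \<Rightarrow> bool" where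
  "binomial_winner n m pos j \<longleftrightarrow> j \<in> {1..m} \<and> (\<forall>j'\<in>{1..m}. binom_score n m pos j' \<le> binom_score n m pos j)"

definition largest_median :: "real measure \<Rightarrow> real" where
  "largest_median D = Sup {y. measure D {x. x \<le> y} \<le> 1/2}"

end

theory Submission
  imports Defs
begin

(*
  Let nu be the largest median of D and p = Pr[x >= nu], so p >= 1/2.  The k-th largest of
  m samples is at least nu as soon as at least k of the samples are >= nu, so the expected
  utility of the alternative a voter ranks k-th is at least nu * Pr[Bin(m, p) >= k], which
  grows with p and hence is at least nu * Pr[Bin(m, 1/2) >= k] = nu * beta_k / 2^m, where
  beta_k = sum_{l >= k} (m choose l) is exactly the binomial voting score of position k.
  Thus the winner's expected welfare is at least nu / 2^m times its score, and its score is
  at least the average score n * 2^(m-1).  On the other hand, utilities lie in [0, 1], so no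
  alternative has expected welfare above n.
*)

section \<open>Order statistics\<close>

lemma kth_largest_mem:
  assumes "1 \<le> k" "k \<le> m"
  shows "kth_largest m x k \<in> x ` {..<m}"
proof -
  have "kth_largest m x k \<in> set (rev (sort (map x [0..<m])))"
    unfolding kth_largest_def using assms by (intro nth_mem) simp
  then show ?thesis by auto
qed

lemma card_filter_rev_sort:
  "card {s. s < m \<and> P (x s)} = card {i. i < m \<and> P (rev (sort (map x [0..<m])) ! i)}"
proof -
  have "card {s. s < m \<and> P (x s)} = length (filter P (map x [0..<m]))"
    unfolding length_filter_conv_card by (intro arg_cong[where f=card]) auto
  also have "\<dots> = length (filter P (rev (sort (map x [0..<m]))))"
    by (metis mset_filter mset_rev mset_sort size_mset)
  also have "\<dots> = card {i. i < m \<and> P (rev (sort (map x [0..<m])) ! i)}"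
    unfolding length_filter_conv_card by simp
  finally show ?thesis .
qed

lemma rev_sort_nth_antimono:
  fixes xs :: "'a::linorder list"
  assumes "a \<le> b" "b < length xs"
  shows "rev (sort xs) ! b \<le> rev (sort xs) ! a"
  using assms by (simp add: rev_nth sorted_nth_mono)

lemma kth_largest_ge_iff:
  assumes k: "1 \<le> k" "k \<le> m"
  shows "t \<le> kth_largest m x k \<longleftrightarrow> k \<le> card {s. s < m \<and> t \<le> x s}"
proof -
  define L where "L = rev (sort (map x [0..<m]))"
  define S where "S = {i. i < m \<and> t \<le> L ! i}"
  have kth: "kth_largest m x k = L ! (k - 1)"
    unfolding kth_largest_def L_def ..
  have desc: "L ! b \<le> L ! a" if "a \<le> b" "b < m" for a b
    unfolding L_def using that by (intro rev_sort_nth_antimono) auto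
  have "t \<le> L ! (k - 1) \<longleftrightarrow> k \<le> card S"
  proof
    assume "t \<le> L ! (k - 1)"
    moreover have "L ! (k - 1) \<le> L ! i" if "i < k" for i
      using desc[of i "k - 1"] that k by simp
    ultimately have "{..<k} \<subseteq> S"
      unfolding S_def using k by force
    then show "k \<le> card S"
      using card_mono[of S "{..<k}"] by (simp add: S_def)
  next
    assume "k \<le> card S"
    show "t \<le> L ! (k - 1)"
    proof (rule ccontr)
      assume "\<not> t \<le> L ! (k - 1)"
      then have "i < k - 1" if "i < m" "t \<le> L ! i" for i
        using desc[of "k - 1" i] that by (meson not_le order_trans)
      then have "S \<subseteq> {..<k - 1}"
        unfolding S_def by blast
      then have "card S \<le> k - 1"
        using card_mono[of "{..<k - 1}" S] by simp
      with \<open>k \<le> card S\<close> k show False by simp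
    qed
  qed
  then show ?thesis
    unfolding kth S_def L_def card_filter_rev_sort[of m "\<lambda>v. t \<le> v" x] .
qed

lemma real_card_eq_sum_indicator:
  "finite J \<Longrightarrow> real (card {s\<in>J. x s \<in> B}) = (\<Sum>s\<in>J. indicator B (x s))"
  by (simp add: indicator_def sum.If_cases Int_def)

lemma borel_measurable_kth_largest:
  assumes f: "\<And>s. s < m \<Longrightarrow> f s \<in> borel_measurable M" and k: "1 \<le> k" "k \<le> m"
  shows "(\<lambda>\<omega>. kth_largest m (\<lambda>s. f s \<omega>) k) \<in> borel_measurable M"
proof (subst borel_measurable_iff_ge, intro allI)
  fix t
  have "t \<le> kth_largest m (\<lambda>s. f s \<omega>) k
      \<longleftrightarrow> real k \<le> (\<Sum>s\<in>{..<m}. indicator {t..} (f s \<omega>))" for \<omega>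
  proof -
    have "real (card {s. s < m \<and> t \<le> f s \<omega>}) = (\<Sum>s\<in>{..<m}. indicator {t..} (f s \<omega>))"
      using real_card_eq_sum_indicator[of "{..<m}" "\<lambda>s. f s \<omega>" "{t..}"] by simp
    then show ?thesis
      unfolding kth_largest_ge_iff[OF k] of_nat_le_iff[symmetric, where 'a=real] by (simp only:)
  qed
  moreover have "{\<omega>\<in>space M. real k \<le> (\<Sum>s\<in>{..<m}. indicator {t..} (f s \<omega>))} \<in> sets M"
    using f by measurable
  ultimately show "{\<omega>\<in>space M. t \<le> kth_largest m (\<lambda>s. f s \<omega>) k} \<in> sets M"
    by simp
qed

lemma kth_largest_cong:
  assumes "\<And>s. s < m \<Longrightarrow> x s = y s"
  shows "kth_largest m x k = kth_largest m y k"
proof -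
  have "map x [0..<m] = map y [0..<m]"
    using assms by simp
  then show ?thesis
    unfolding kth_largest_def by (simp only:)
qed

section \<open>Binomial tails\<close>

(* Pr[Bin(m, p) >= k], computed by conditioning on the outcome of the first trial. *)
fun binomial_tail :: "nat \<Rightarrow> nat \<Rightarrow> real \<Rightarrow> real" where
  "binomial_tail m 0 p = 1"
| "binomial_tail 0 (Suc k) p = 0"
| "binomial_tail (Suc m) (Suc k) p = p * binomial_tail m k p + (1 - p) * binomial_tail m (Suc k) p"

context
  fixes p :: real
  assumes p: "0 \<le> p" "p \<le> 1"
begin

lemma binomial_tail_bounds: "0 \<le> binomial_tail m k p \<and> binomial_tail m k p \<le> 1"
proof (induction m arbitrary: k)
  case 0
  then show ?case by (cases k) simp_all
next
  case (Suc m)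
  show ?case
  proof (cases k)
    case (Suc k')
    have "0 \<le> p * binomial_tail m k' p + (1 - p) * binomial_tail m k p"
      using Suc.IH p by (intro add_nonneg_nonneg mult_nonneg_nonneg) auto
    moreover have "p * binomial_tail m k' p + (1 - p) * binomial_tail m k p \<le> p * 1 + (1 - p) * 1"
      using Suc.IH p by (intro add_mono mult_left_mono) auto
    ultimately show ?thesis
      by (simp add: Suc)
  qed simp
qed

lemma binomial_tail_Suc_le: "binomial_tail m (Suc k) p \<le> binomial_tail m k p"
proof (induction m arbitrary: k)
  case 0
  then show ?case by (cases k) simp_all
next
  case (Suc m)
  show ?case
  proof (cases k)
    case 0
    then show ?thesis using binomial_tail_bounds[of "Suc m" 1] by simp
  next
    case (Suc k')
    have "p * binomial_tail m k p + (1 - p) * binomial_tail m (Suc k) p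
        \<le> p * binomial_tail m k' p + (1 - p) * binomial_tail m k p"
      using Suc.IH p by (intro add_mono mult_left_mono) (auto simp: Suc)
    then show ?thesis by (simp add: Suc)
  qed
qed

end

lemma binomial_tail_mono:
  assumes "0 \<le> p" "p \<le> q" "q \<le> 1"
  shows "binomial_tail m k p \<le> binomial_tail m k q"
proof (induction m arbitrary: k)
  case 0
  then show ?case by (cases k) simp_all
next
  case (Suc m)
  show ?case
  proof (cases k)
    case (Suc k')
    have "p * binomial_tail m k' p + (1 - p) * binomial_tail m k p
        = binomial_tail m k p + p * (binomial_tail m k' p - binomial_tail m k p)"
      by (simp add: algebra_simps)
    also have "\<dots> \<le> binomial_tail m k p + q * (binomial_tail m k' p - binomial_tail m k p)"
      using binomial_tail_Suc_le[of p m k'] assms by (intro add_left_mono mult_right_mono) (auto simp: Suc)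
    also have "\<dots> = q * binomial_tail m k' p + (1 - q) * binomial_tail m k p"
      by (simp add: algebra_simps)
    also have "\<dots> \<le> q * binomial_tail m k' q + (1 - q) * binomial_tail m k q"
      using Suc.IH assms by (intro add_mono mult_left_mono) auto
    finally show ?thesis by (simp add: Suc)
  qed simp
qed

lemma borel_measurable_card_ge:
  assumes "finite J" "B \<in> sets M"
  shows "(\<lambda>\<omega>. of_bool (k \<le> card {s\<in>J. \<omega> s \<in> B}) :: real) \<in> borel_measurable (PiM J (\<lambda>_. M))"
proof -
  have "(\<lambda>\<omega>. of_bool (k \<le> card {s\<in>J. \<omega> s \<in> B}) :: real)
      = (\<lambda>\<omega>. of_bool (real k \<le> (\<Sum>s\<in>J. indicator B (\<omega> s))))"
    by (simp only: real_card_eq_sum_indicator[OF assms(1), symmetric] of_nat_le_iff)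
  also have "\<dots> \<in> borel_measurable (PiM J (\<lambda>_. M))"
    using assms by measurable
  finally show ?thesis .
qed

lemma integral_PiM_card_ge:
  assumes M: "prob_space M" and B: "B \<in> sets M" and J: "finite J"
  shows "(\<integral>\<omega>. of_bool (k \<le> card {s\<in>J. \<omega> s \<in> B}) \<partial>PiM J (\<lambda>_. M))
    = binomial_tail (card J) k (measure M B)"
  using J
proof (induction J arbitrary: k rule: finite_induct)
  case empty
  show ?case by (cases k) (simp_all add: PiM_empty)
next
  case (insert a J)
  interpret prob_space M by (rule M)
  interpret product_prob_space "\<lambda>_. M" by (rule product_prob_spaceI) (rule M)
  interpret PaJ: prob_space "PiM (insert a J) (\<lambda>_. M)" by (rule prob_space_PiM) (rule M)
  define p where "p = measure M B"
  define c where "c x = card {s\<in>J. x s \<in> B}" for x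
  have integrable: "integrable (PiM I (\<lambda>_. M)) (\<lambda>\<omega>. of_bool (l \<le> card {s\<in>I. \<omega> s \<in> B}) :: real)"
    if "finite I" for I l
  proof -
    interpret PI: prob_space "PiM I (\<lambda>_. M)" by (rule prob_space_PiM) (rule M)
    show ?thesis
      by (rule PI.integrable_const_bound[where B=1]) (auto intro: borel_measurable_card_ge that B)
  qed
  have affine: "(\<integral>y. u + v * indicator B y \<partial>M) = u + v * p" for u v :: real
    using B by (subst Bochner_Integration.integral_add)
      (auto simp: p_def prob_space.prob_space[OF M] less_top[symmetric] emeasure_finite)
  show ?case
  proof (cases k)
    case (Suc k')
    have step: "(of_bool (Suc k' \<le> card {s\<in>insert a J. (x(a := y)) s \<in> B}) :: real)
        = of_bool (Suc k' \<le> c x) + (of_bool (k' \<le> c x) - of_bool (Suc k' \<le> c x)) * indicator B y"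
      for x y
    proof -
      have "{s\<in>insert a J. (x(a := y)) s \<in> B}
          = (if y \<in> B then insert a {s\<in>J. x s \<in> B} else {s\<in>J. x s \<in> B})"
        using insert.hyps(2) by auto
      then show ?thesis
        using insert.hyps by (auto simp: c_def)
    qed
    have "(\<integral>\<omega>. of_bool (k \<le> card {s\<in>insert a J. \<omega> s \<in> B}) \<partial>PiM (insert a J) (\<lambda>_. M))
        = (\<integral>x. (\<integral>y. (of_bool (Suc k' \<le> card {s\<in>insert a J. (x(a := y)) s \<in> B}) :: real) \<partial>M) \<partial>PiM J (\<lambda>_. M))"
      unfolding Suc by (rule product_integral_insert[OF insert.hyps]) (rule integrable, simp add: insert.hyps)
    also have "\<dots> = (\<integral>x. of_bool (Suc k' \<le> c x)
        + (of_bool (k' \<le> c x) - of_bool (Suc k' \<le> c x)) * p \<partial>PiM J (\<lambda>_. M))"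
      unfolding step affine ..
    also have "\<dots> = binomial_tail (card J) (Suc k') p
        + (binomial_tail (card J) k' p - binomial_tail (card J) (Suc k') p) * p"
      using insert.IH integrable[OF insert.hyps(1)] by (simp add: c_def p_def)
    also have "\<dots> = binomial_tail (card (insert a J)) k p"
      using insert.hyps by (simp add: Suc algebra_simps)
    finally show ?thesis unfolding p_def .
  qed (simp add: PaJ.prob_space)
qed

section \<open>Binomial voting scores\<close>

lemma binom_points_Suc_Suc:
  "binom_points (Suc m) (Suc k) = binom_points m k + binom_points m (Suc k)"
proof -
  have "binom_points (Suc m) (Suc k) = (\<Sum>l=k..m. Suc m choose Suc l)"
    unfolding binom_points_def by (rule sum.shift_bounds_cl_Suc_ivl)
  also have "\<dots> = (\<Sum>l=k..m. m choose l) + (\<Sum>l=k..m. m choose Suc l)"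
    by (simp add: sum.distrib)
  also have "(\<Sum>l=k..m. m choose Suc l) = (\<Sum>l=Suc k..Suc m. m choose l)"
    by (rule sum.shift_bounds_cl_Suc_ivl[symmetric])
  finally show ?thesis
    unfolding binom_points_def by simp
qed

lemma binomial_tail_half: "binomial_tail m k (1/2) = binom_points m k / 2 ^ m"
proof (induction m arbitrary: k)
  case 0
  then show ?case by (cases k) (auto simp: binom_points_def)
next
  case (Suc m)
  show ?case
  proof (cases k)
    case 0
    have "binom_points (Suc m) 0 = 2 ^ Suc m"
      unfolding binom_points_def atLeast0AtMost by (rule choose_row_sum)
    then show ?thesis by (simp add: 0)
  next
    case (Suc k')
    then show ?thesis using Suc.IH by (simp add: binom_points_Suc_Suc field_simps)
  qed
qed

lemma sum_suffix_sums:
  fixes f :: "nat \<Rightarrow> 'a::comm_semiring_1"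
  shows "(\<Sum>k=1..N. \<Sum>l=k..N. f l) = (\<Sum>l=1..N. of_nat l * f l)"
proof (induction N)
  case (Suc N)
  have "(\<Sum>k=1..N. \<Sum>l=k..Suc N. f l) = (\<Sum>k=1..N. (\<Sum>l=k..N. f l) + f (Suc N))"
    by (intro sum.cong) auto
  then have "(\<Sum>k=1..Suc N. \<Sum>l=k..Suc N. f l)
      = (\<Sum>k=1..N. \<Sum>l=k..N. f l) + of_nat N * f (Suc N) + f (Suc N)"
    by (simp add: sum.distrib algebra_simps)
  with Suc.IH show ?case
    by (simp add: algebra_simps)
qed simp

lemma sum_binom_points: "(\<Sum>k=1..m. binom_points m k) = m * 2 ^ (m - 1)"
proof -
  have "(\<Sum>k=1..m. binom_points m k) = (\<Sum>l=1..m. l * (m choose l))"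
    unfolding binom_points_def using sum_suffix_sums[of "\<lambda>l. m choose l" m] by simp
  also have "\<dots> = (\<Sum>l\<le>m. l * (m choose l))"
    by (simp add: atMost_atLeast0 sum.atLeast_Suc_atMost)
  finally show ?thesis
    by (simp add: choose_linear_sum)
qed

lemma is_profile_pos_in:
  "is_profile n m pos \<Longrightarrow> i \<in> {1..n} \<Longrightarrow> j \<in> {1..m} \<Longrightarrow> pos i j \<in> {1..m}"
  unfolding is_profile_def by (meson bij_betw_apply)

lemma sum_binom_score:
  assumes "is_profile n m pos"
  shows "(\<Sum>j\<in>{1..m}. binom_score n m pos j) = n * (m * 2 ^ (m - 1))"
proof -
  have "(\<Sum>j\<in>{1..m}. binom_score n m pos j) = (\<Sum>i\<in>{1..n}. \<Sum>j\<in>{1..m}. binom_points m (pos i j))"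
    unfolding binom_score_def by (rule sum.swap)
  also have "\<dots> = (\<Sum>i\<in>{1..n}. \<Sum>k\<in>{1..m}. binom_points m k)"
    using assms unfolding is_profile_def by (intro sum.cong refl sum.reindex_bij_betw) auto
  finally show ?thesis
    using sum_binom_points[of m] by simp
qed

lemma binomial_winner_score_ge:
  assumes "is_profile n m pos" "binomial_winner n m pos j"
  shows "n * 2 ^ (m - 1) \<le> binom_score n m pos j"
proof -
  have "m * (n * 2 ^ (m - 1)) = (\<Sum>j'\<in>{1..m}. binom_score n m pos j')"
    using sum_binom_score[OF assms(1)] by simp
  also have "\<dots> \<le> m * binom_score n m pos j"
    using sum_bounded_above[of "{1..m}" "binom_score n m pos"] assms(2)
    unfolding binomial_winner_def by simp
  finally have "m * (n * 2 ^ (m - 1)) \<le> m * binom_score n m pos j" .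
  moreover have "0 < m"
    using assms(2) unfolding binomial_winner_def by auto
  ultimately show ?thesis
    using mult_le_cancel1 by blast
qed

section \<open>The largest median\<close>

context real_distribution
begin

lemma bdd_above_cdf_le:
  assumes "c < 1"
  shows "bdd_above {y. cdf M y \<le> c}"
proof -
  have "eventually (\<lambda>y. c < cdf M y) at_top"
    using cdf_lim_at_top_prob assms by (rule order_tendstoD)
  then obtain Y where "\<And>y. Y \<le> y \<Longrightarrow> c < cdf M y"
    by (auto simp: eventually_at_top_linorder)
  then have "y \<le> Y" if "cdf M y \<le> c" for y
    using that by (meson linear not_le)
  then show ?thesis
    by (auto intro!: bdd_aboveI[where M=Y])
qed

lemma ex_cdf_le:
  assumes "0 < c"
  shows "\<exists>y. cdf M y \<le> c"
proof -
  have "eventually (\<lambda>y. cdf M y < c) at_bot"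
    using cdf_lim_at_bot assms by (rule order_tendstoD)
  then obtain Y where "\<And>y. y \<le> Y \<Longrightarrow> cdf M y < c"
    by (auto simp: eventually_at_bot_linorder)
  then show ?thesis
    by (meson less_imp_le order_refl)
qed

lemma measure_lessThan_Sup_cdf_le:
  assumes "0 < c" "c < 1"
  shows "measure M {..<Sup {y. cdf M y \<le> c}} \<le> c"
proof -
  define q where "q = Sup {y. cdf M y \<le> c}"
  have nonempty: "{y. cdf M y \<le> c} \<noteq> {}"
    using ex_cdf_le[OF assms(1)] by auto
  have "cdf M y \<le> c" if y: "y < q" for y
  proof -
    obtain z where "cdf M z \<le> c" "y < z"
      using y less_cSup_iff[OF nonempty bdd_above_cdf_le[OF assms(2)], of y]
      unfolding q_def by auto
    then show ?thesis
      using cdf_nondecreasing[of y z] by simp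
  qed
  then have "eventually (\<lambda>y. cdf M y \<le> c) (at_left q)"
    by (subst eventually_at_left[of "q - 1"]) (auto simp: lt_ex)
  then show ?thesis
    using tendsto_upperbound[OF cdf_at_left] trivial_limit_at_left_real unfolding q_def by blast
qed

lemma largest_median_eq_Sup_cdf: "largest_median M = Sup {y. cdf M y \<le> 1/2}"
  unfolding largest_median_def cdf_def2 atMost_def ..

lemma measure_atLeast_largest_median: "1/2 \<le> measure M {largest_median M..}"
proof -
  have "measure M {largest_median M..} = 1 - measure M {..<largest_median M}"
    using prob_compl[of "{..<largest_median M}"] by (simp add: Compl_eq_Diff_UNIV[symmetric])
  with measure_lessThan_Sup_cdf_le[of "1/2"] show ?thesis
    by (simp add: largest_median_eq_Sup_cdf)
qed

lemma largest_median_nonneg: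
  assumes "AE x in M. 0 \<le> x"
  shows "0 \<le> largest_median M"
proof (rule dense_le)
  fix y :: real
  assume "y < 0"
  from assms have "AE x in M. x \<in> {..y} \<longleftrightarrow> x \<in> {}"
    by eventually_elim (use \<open>y < 0\<close> in auto)
  then have "measure M {..y} = measure M {}"
    by (rule measure_eq_AE) auto
  then show "y \<le> largest_median M"
    unfolding largest_median_eq_Sup_cdf cdf_def2[symmetric] by (intro cSup_upper bdd_above_cdf_le) auto
qed

end

section \<open>Expected welfare\<close>

definition expected_kth_largest :: "real measure \<Rightarrow> nat \<Rightarrow> nat \<Rightarrow> real" where
  "expected_kth_largest M m k = (\<integral>\<omega>. kth_largest m \<omega> k \<partial>PiM {..<m} (\<lambda>_. M))"

context real_distribution
begin

lemma borel_measurable_kth_largest_PiM: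
  assumes "1 \<le> k" "k \<le> m"
  shows "(\<lambda>\<omega>. kth_largest m \<omega> k) \<in> borel_measurable (PiM {..<m} (\<lambda>_. M))"
  using borel_measurable_kth_largest[of m "\<lambda>s \<omega>. \<omega> s"] assms by simp

context
  assumes unit: "AE x in M. x \<in> {0..1}"
begin

lemma AE_PiM_kth_largest_unit:
  assumes "1 \<le> k" "k \<le> m"
  shows "AE \<omega> in PiM {..<m} (\<lambda>_. M). (\<forall>s<m. \<omega> s \<in> {0..1}) \<and> kth_largest m \<omega> k \<in> {0..1}"
proof -
  have "AE \<omega> in PiM {..<m} (\<lambda>_. M). \<forall>s\<in>{..<m}. \<omega> s \<in> {0..1}"
    using unit by (intro AE_finite_allI AE_PiM_component) (auto intro: prob_space_axioms)
  then show ?thesis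
  proof eventually_elim
    case (elim \<omega>)
    then show ?case
      using kth_largest_mem[OF assms, of \<omega>] by auto
  qed
qed

lemma integrable_kth_largest:
  assumes "1 \<le> k" "k \<le> m"
  shows "integrable (PiM {..<m} (\<lambda>_. M)) (\<lambda>\<omega>. kth_largest m \<omega> k)"
proof -
  interpret P: prob_space "PiM {..<m} (\<lambda>_. M)"
    by (intro prob_space_PiM prob_space_axioms)
  show ?thesis
    using AE_PiM_kth_largest_unit[OF assms]
    by (intro P.integrable_const_bound[where B=1] borel_measurable_kth_largest_PiM assms) auto
qed

lemma expected_kth_largest_le_1:
  assumes "1 \<le> k" "k \<le> m"
  shows "expected_kth_largest M m k \<le> 1"
proof -
  interpret P: prob_space "PiM {..<m} (\<lambda>_. M)"
    by (intro prob_space_PiM prob_space_axioms)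
  have "expected_kth_largest M m k \<le> (\<integral>\<omega>. 1 \<partial>PiM {..<m} (\<lambda>_. M))"
    unfolding expected_kth_largest_def using AE_PiM_kth_largest_unit[OF assms]
    by (intro integral_mono_AE integrable_kth_largest assms) auto
  then show ?thesis
    using P.prob_space by simp
qed

lemma expected_kth_largest_ge:
  assumes "1 \<le> k" "k \<le> m" "0 \<le> t"
  shows "t * binomial_tail m k (measure M {t..}) \<le> expected_kth_largest M m k"
proof -
  interpret P: prob_space "PiM {..<m} (\<lambda>_. M)"
    by (intro prob_space_PiM prob_space_axioms)
  have "t * binomial_tail m k (measure M {t..})
      = (\<integral>\<omega>. t * of_bool (k \<le> card {s\<in>{..<m}. \<omega> s \<in> {t..}}) \<partial>PiM {..<m} (\<lambda>_. M))"
    using integral_PiM_card_ge[OF prob_space_axioms, of "{t..}" "{..<m}" k] by simp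
  also have "\<dots> \<le> expected_kth_largest M m k"
    unfolding expected_kth_largest_def
  proof (intro integral_mono_AE integrable_kth_largest assms)
    show "integrable (PiM {..<m} (\<lambda>_. M)) (\<lambda>\<omega>. t * of_bool (k \<le> card {s\<in>{..<m}. \<omega> s \<in> {t..}}))"
      by (intro integrable_mult_right P.integrable_const_bound[where B=1] borel_measurable_card_ge) auto
    show "AE \<omega> in PiM {..<m} (\<lambda>_. M).
        t * of_bool (k \<le> card {s\<in>{..<m}. \<omega> s \<in> {t..}}) \<le> kth_largest m \<omega> k"
      using AE_PiM_kth_largest_unit[OF assms(1,2)]
      by eventually_elim (use assms in \<open>auto simp: kth_largest_ge_iff\<close>)
  qed
  finally show ?thesis .
qed

lemma expected_sw_eq_sum_expected_kth_largest:
  assumes "is_profile n m pos" "j \<in> {1..m}"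
  shows "expected_sw M n m pos j = (\<Sum>i\<in>{1..n}. expected_kth_largest M m (pos i j))"
proof -
  define K where "K = {1..n} \<times> {..<m}"
  have sample_space: "sample_space n m M = PiM K (\<lambda>_. M)"
    unfolding sample_space_def K_def ..
  have pos: "pos i j \<in> {1..m}" if "i \<in> {1..n}" for i
    using assms(1) that assms(2) by (rule is_profile_pos_in)
  have reindex: "distr (PiM K (\<lambda>_. M)) (PiM {..<m} (\<lambda>_. M)) (\<lambda>\<omega>. \<lambda>s\<in>{..<m}. \<omega> (i, s))
      = PiM {..<m} (\<lambda>_. M)" if "i \<in> {1..n}" for i
    using distr_PiM_reindex[of K "\<lambda>_. M" "\<lambda>s. (i, s)" "{..<m}"] prob_space_axioms that
    by (auto simp: K_def inj_on_def)
  have restrict: "kth_largest m (\<lambda>s\<in>{..<m}. \<omega> (i, s)) k = kth_largest m (\<lambda>s. \<omega> (i, s)) k" for \<omega> i k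
    by (rule kth_largest_cong) simp
  have measurable: "(\<lambda>\<omega>. \<lambda>s\<in>{..<m}. \<omega> (i, s)) \<in> PiM K (\<lambda>_. M) \<rightarrow>\<^sub>M PiM {..<m} (\<lambda>_. M)"
    if "i \<in> {1..n}" for i
    using that by (auto simp: K_def intro!: measurable_restrict measurable_component_singleton)
  have "integrable (sample_space n m M) (\<lambda>\<omega>. utility m pos \<omega> i j)
      \<and> (\<integral>\<omega>. utility m pos \<omega> i j \<partial>sample_space n m M) = expected_kth_largest M m (pos i j)"
    if i: "i \<in> {1..n}" for i
    using integrable_kth_largest[of "pos i j" m] pos[OF i]
      integrable_distr_eq[OF measurable[OF i] borel_measurable_kth_largest_PiM, of "pos i j"]
      integral_distr[OF measurable[OF i] borel_measurable_kth_largest_PiM, of "pos i j"]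
    by (simp add: reindex[OF i] restrict utility_def sample_space expected_kth_largest_def)
  then show ?thesis
    unfolding expected_sw_def sw_def by (subst Bochner_Integration.integral_sum) auto
qed

lemma expected_sw_le_num_voters:
  assumes "is_profile n m pos" "j \<in> {1..m}"
  shows "expected_sw M n m pos j \<le> n"
proof -
  have "pos i j \<in> {1..m}" if "i \<in> {1..n}" for i
    using assms(1) that assms(2) by (rule is_profile_pos_in)
  then have "(\<Sum>i\<in>{1..n}. expected_kth_largest M m (pos i j)) \<le> (\<Sum>i\<in>{1..n}. 1)"
    by (intro sum_mono expected_kth_largest_le_1) auto
  then show ?thesis
    by (simp add: expected_sw_eq_sum_expected_kth_largest[OF assms])
qed

lemma largest_median_binom_score_le_expected_sw:
  assumes "is_profile n m pos" "j \<in> {1..m}"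
  shows "largest_median M * (binom_score n m pos j / 2 ^ m) \<le> expected_sw M n m pos j"
proof -
  define \<nu> where "\<nu> = largest_median M"
  define p where "p = measure M {\<nu>..}"
  have \<nu>: "0 \<le> \<nu>"
    unfolding \<nu>_def using unit by (intro largest_median_nonneg) (auto elim: eventually_mono)
  have p: "1/2 \<le> p" "p \<le> 1"
    unfolding p_def \<nu>_def using measure_atLeast_largest_median by auto
  have pos: "pos i j \<in> {1..m}" if "i \<in> {1..n}" for i
    using assms(1) that assms(2) by (rule is_profile_pos_in)
  have "\<nu> * (binom_score n m pos j / 2 ^ m) = \<nu> * (\<Sum>i\<in>{1..n}. binomial_tail m (pos i j) (1/2))"
    by (simp add: binom_score_def binomial_tail_half sum_divide_distrib)
  also have "\<dots> \<le> (\<Sum>i\<in>{1..n}. \<nu> * binomial_tail m (pos i j) p)"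
    unfolding sum_distrib_left using \<nu> p by (intro sum_mono mult_left_mono binomial_tail_mono) auto
  also have "\<dots> \<le> (\<Sum>i\<in>{1..n}. expected_kth_largest M m (pos i j))"
    unfolding p_def using pos \<nu> by (intro sum_mono expected_kth_largest_ge) auto
  finally show ?thesis
    unfolding \<nu>_def expected_sw_eq_sum_expected_kth_largest[OF assms] .
qed

end

end

theorem theorem7:
  fixes D :: "real measure" and n m :: nat and pos :: "nat \<Rightarrow> nat \<Rightarrow> nat" and j :: nat
  assumes "prob_space D"
    and "sets D = sets borel"
    and "AE x in D. x \<in> {0..1}"
    and "m \<ge> 1"
    and "is_profile n m pos"
    and "binomial_winner n m pos j"
  shows "expected_sw D n m pos j \<ge>
           largest_median D / 2 * (MAX j'\<in>{1..m}. expected_sw D n m pos j')"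
proof -
  interpret real_distribution D
    using assms(1,2) by (simp add: real_distribution_def real_distribution_axioms_def)
  have j: "j \<in> {1..m}"
    using assms(6) unfolding binomial_winner_def by simp
  have \<nu>: "0 \<le> largest_median D"
    using assms(3) by (intro largest_median_nonneg) (auto elim: eventually_mono)
  have "(MAX j'\<in>{1..m}. expected_sw D n m pos j') \<le> n"
    using assms(3-5) expected_sw_le_num_voters by (subst Max_le_iff) auto
  then have "largest_median D / 2 * (MAX j'\<in>{1..m}. expected_sw D n m pos j')
      \<le> largest_median D / 2 * n"
    using \<nu> by (intro mult_left_mono) auto
  also have "\<dots> = largest_median D * (real n * 2 ^ (m - 1) / 2 ^ m)"
    using assms(4) by (cases m) simp_all
  also have "\<dots> \<le> largest_median D * (binom_score n m pos j / 2 ^ m)"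
  proof -
    have "real (n * 2 ^ (m - 1)) \<le> real (binom_score n m pos j)"
      using binomial_winner_score_ge[OF assms(5,6)] by (rule of_nat_mono)
    with \<nu> show ?thesis
      by (intro mult_left_mono divide_right_mono) simp_all
  qed
  also have "\<dots> \<le> expected_sw D n m pos j"
    using largest_median_binom_score_le_expected_sw[OF assms(3,5) j] .
  finally show ?thesis .
qed

end
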